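(* For all integers $r\ge1$, $1\le l\le r$ and $0\le z\le q\le r$, $$ r\sum_{m=0}^{z}\binom{l-1}{m}\binom{r-l}{q-m-1}\;\ge\; q\sum_{m=0}^{z}\binom{l-1}{m}\binom{r-l+1}{q-m}. $$
   Context: Binomial coefficients $\binom{a}{b}$ are taken to be $0$ when $b<0$ or $b>a$. *)

theory Defs
  imports Main
begin

definition binom :: "int \<Rightarrow> int \<Rightarrow> int" where
  "binom a b = (if 0 \<le> b \<and> b \<le> a then int (nat a choose nat b) else 0)"

end

theory Submission
  imports Defs
begin

(* Proof idea.  Put a = l - 1 and b = r - l, so r = a + b + 1.  For every
   z >= 0 the defect

     D(z) = (a+b+1) * SUM_{m<=z} C(a,m) C(b,q-m-1) - q * SUM_{m<=z} C(a,m) C(b+1,q-m)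

   has the closed form D(z) = (a - z) C(a,z) C(b,q-z-1).  This is proved by
   induction on z: Pascal's rule splits C(b+1,q-m) and the absorption identity
   (n - k) C(n,k) = (k+1) C(n,k+1) makes the new summand cancel against the
   previous closed form.  The closed form is nonnegative, since C(a,z) = 0
   whenever z > a, which is exactly the claimed inequality. *)

lemma binom_of_nat: "binom (int n) (int k) = int (n choose k)"
  by (simp add: binom_def)

lemma binom_nonneg: "binom a b \<ge> 0"
  by (simp add: binom_def)

lemma binom_eq_0: "b < 0 \<or> a < b \<Longrightarrow> binom a b = 0"
  by (auto simp: binom_def)

lemma diff_times_binomial: "(n - k) * (n choose k) = Suc k * (n choose Suc k)"
proof (cases n)
  case 0
  then show ?thesis by simp
next
  case (Suc m)
  then show ?thesis
    using binomial_absorb_comp[of n k] Suc_times_binomial[of k m] by simp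
qed

(* The absorption identity for binom holds for all integer arguments:
   outside 0 <= k <= n both sides vanish (for k = -1 because of the factor k+1). *)
lemma binom_absorption: "(n - k) * binom n k = (k + 1) * binom n (k + 1)"
proof (cases "0 \<le> k \<and> k \<le> n")
  case True
  define N K where "N = nat n" and "K = nat k"
  have NK: "n = int N" "k = int K" "K \<le> N"
    using True by (auto simp: N_def K_def)
  have "int ((N - K) * (N choose K)) = int (Suc K * (N choose Suc K))"
    using diff_times_binomial by simp
  then have "(n - k) * binom n k = (k + 1) * binom n (int (Suc K))"
    using NK by (simp only: binom_of_nat of_nat_mult of_nat_diff) simp
  then show ?thesis using NK by (simp add: add.commute)
next
  case False
  then consider "k = -1" | "k < -1" | "n < k" by linarith
  then show ?thesis by cases (simp_all add: binom_eq_0)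
qed

lemma binom_absorption_pred: "j * binom n j = (n - j + 1) * binom n (j - 1)"
  using binom_absorption[of n "j - 1"] by (simp add: algebra_simps)

(* Pascal's rule for binom; the upper argument must be nonnegative
   (it fails for n = -1, j = 0). *)
lemma binom_pascal:
  assumes "n \<ge> 0"
  shows "binom (n + 1) j = binom n j + binom n (j - 1)"
proof (cases "j \<ge> 1")
  case True
  define N I where "N = nat n" and "I = nat (j - 1)"
  have NI: "n = int N" "j = int (Suc I)"
    using assms True by (simp_all add: N_def I_def)
  have "binom (int (Suc N)) (int (Suc I)) = binom (int N) (int (Suc I)) + binom (int N) (int I)"
    by (simp only: binom_of_nat binomial_Suc_Suc of_nat_add add.commute)
  then show ?thesis using NI by (simp add: add.commute)
next
  case False
  then show ?thesis using assms by (cases "j = 0") (simp_all add: binom_def)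
qed

lemma partial_sum_defect:
  fixes a b q z :: int
  assumes a: "a \<ge> 0" and b: "b \<ge> 0" and z: "z \<ge> 0"
  shows "(a + b + 1) * (\<Sum>m=0..z. binom a m * binom b (q - m - 1))
         - q * (\<Sum>m=0..z. binom a m * binom (b + 1) (q - m))
         = (a - z) * binom a z * binom b (q - z - 1)"
  using z
proof (induction z rule: int_ge_induct)
  case base
  have "binom a 0 = 1" using a by (simp add: binom_def)
  moreover have "binom (b + 1) q = binom b q + binom b (q - 1)"
    using binom_pascal b by simp
  moreover have "q * binom b q = (b - q + 1) * binom b (q - 1)"
    by (rule binom_absorption_pred)
  ultimately show ?case by (simp add: algebra_simps)
next
  case (step z)
  define j where "j = q - z - 1"
  have split: "{0..z + 1} = insert (z + 1) {0..z}" using step by auto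
  have absorb_a: "(a - z) * binom a z = (z + 1) * binom a (z + 1)"
    by (rule binom_absorption)
  have pascal_b: "binom (b + 1) j = binom b j + binom b (j - 1)"
    using binom_pascal b by simp
  have absorb_b: "j * binom b j = (b - j + 1) * binom b (j - 1)"
    by (rule binom_absorption_pred)
  have shifts: "q - (z + 1) - 1 = j - 1" "q - (z + 1) = j" "q - z - 1 = j" "q = j + z + 1"
    using j_def by simp_all
  (* The new summand is C(a,z+1) times a bracket which, after the previous
     closed form is absorbed into it, equals (a-z-1) C(b,j-1). *)
  have "(a + b + 1) * (\<Sum>m=0..z + 1. binom a m * binom b (q - m - 1))
         - q * (\<Sum>m=0..z + 1. binom a m * binom (b + 1) (q - m))
       = (a - z) * binom a z * binom b j
         + binom a (z + 1) * ((a + b + 1) * binom b (j - 1) - q * binom (b + 1) j)"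
    unfolding split using step.IH shifts by (simp add: algebra_simps)
  also have "\<dots> = binom a (z + 1) * ((a - (z + 1)) * binom b (j - 1)
                      - (j * binom b j - (b - j + 1) * binom b (j - 1)))"
    unfolding absorb_a pascal_b shifts(4) by (simp add: algebra_simps)
  also have "\<dots> = (a - (z + 1)) * binom a (z + 1) * binom b (q - (z + 1) - 1)"
    unfolding absorb_b shifts(1) by simp
  finally show ?case .
qed

(* The closed form is nonnegative: either z <= a, or C(a,z) = 0. *)
lemma defect_nonneg: "(a - z) * binom a z * binom b c \<ge> 0"
proof (cases "z \<le> a")
  case True
  then show ?thesis by (intro mult_nonneg_nonneg binom_nonneg) simp
next
  case False
  then show ?thesis by (simp add: binom_eq_0)
qed

theorem lemma4p3:
  fixes r l z q :: int
  assumes "r \<ge> 1" and "1 \<le> l" and "l \<le> r" and "0 \<le> z" and "z \<le> q" and "q \<le> r"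
  shows "r * (\<Sum>m=0..z. binom (l - 1) m * binom (r - l) (q - m - 1))
         \<ge> q * (\<Sum>m=0..z. binom (l - 1) m * binom (r - l + 1) (q - m))"
proof -
  let ?lhs = "r * (\<Sum>m=0..z. binom (l - 1) m * binom (r - l) (q - m - 1))"
  let ?rhs = "q * (\<Sum>m=0..z. binom (l - 1) m * binom (r - l + 1) (q - m))"
  have "?lhs - ?rhs = ((l - 1) - z) * binom (l - 1) z * binom (r - l) (q - z - 1)"
    using partial_sum_defect[of "l - 1" "r - l" z q] assms by simp
  also have "\<dots> \<ge> 0"
    by (rule defect_nonneg)
  finally show ?thesis by (simp only: diff_ge_0_iff_ge)
qed

end
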